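(* Let $\theta$ be a random variable with a continuous distribution, let $u(q,\theta)$ be a utility function, monotone increasing in $q$, with $\partial^2u(q,\theta)/\partial q^2=-1/d$ for all $(q,\theta)$, where $d>0$. Let $\lambda>0$, $\epsilon>0$ and let the penalty with deadband be $$\phi(x)=\begin{cases}\dfrac{(|x|-\epsilon)^2}{2\lambda}, & |x|\ge\epsilon,\\ 0, & \text{otherwise.}\end{cases}$$ Let $\pi_0>0$, $\pi_2>0$, $p\in(0,1)$. Define $q^a(\theta)=\arg\min_q\{\pi_0 q-u(q,\theta)\}$, $q^b(f,\theta)=\arg\min_q\{\pi_0 q-u(q,\theta)+\phi(f-q)\}$, $q^c(\theta)=\arg\min_q\{\pi_0 q-u(q,\theta)-\pi_2(f-q)\}$, $$H(f)=p\,\mathbb{E}_\theta[\pi_0 q^c-u(q^c,\theta)-\pi_2(f-q^c)]+(1-p)\,\mathbb{E}_\theta[\pi_0 q^b-u(q^b,\theta)+\phi(f-q^b)],$$ and let $f^*$ be the optimal baseline report (minimizer of $H$). Suppose $q^a(\theta)\in[q_{\min},q_{\max}]$ for all $\theta$ and $\max\{q_{\max}-\mathbb{E}_\theta q^a(\theta),\ \mathbb{E}_\theta q^a(\theta)-q_{\min}\}\le\epsilon$. Then the expected inflation of the baseline report satisfies $$\mathbb{E}_\theta\,\delta f^*(p)=f^*-\mathbb{E}_\theta q^a(\theta)\le(d+\lambda)\frac{p\,\pi_2}{1-p}+\epsilon,$$ and the mechanism is individually rational.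
   Context: A consumer in a demand response program self-reports baseline $f$; with probability $p$ it is called and paid $\pi_2$ per unit of reduction $f-q$, otherwise it pays the penalty $\phi(f-q)$. $\pi_0$ is the retail price and $q^a(\theta)$ is the consumption when not participating (true baseline). Individual rationality means that the consumer's minimal expected cost when participating with its optimal report, $H(f^* )$, is no larger than its expected cost when not participating, $\mathbb{E}_\theta[\pi_0 q^a(\theta)-u(q^a(\theta),\theta)]$. *)

theory Defs
  imports "HOL-Probability.Probability"
begin

text \<open>A minimizer of a real function (chosen by Hilbert choice; the minimizers
  relevant here are unique by strict convexity).\<close>
definition argmin :: "(real \<Rightarrow> real) \<Rightarrow> real" where
  "argmin g = (SOME q. \<forall>q'. g q \<le> g q')"

definition penalty :: "real \<Rightarrow> real \<Rightarrow> real \<Rightarrow> real" where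
  "penalty lam eps x = (if \<bar>x\<bar> \<ge> eps then (\<bar>x\<bar> - eps)^2 / (2 * lam) else 0)"

text \<open>Consumption when not participating (true baseline).\<close>
definition qa :: "real \<Rightarrow> (real \<Rightarrow> 'a \<Rightarrow> real) \<Rightarrow> 'a \<Rightarrow> real" where
  "qa pi0 u \<theta> = argmin (\<lambda>q. pi0 * q - u q \<theta>)"

text \<open>Consumption when not called (pays penalty on deviation from report f).\<close>
definition qb :: "real \<Rightarrow> (real \<Rightarrow> 'a \<Rightarrow> real) \<Rightarrow> (real \<Rightarrow> real) \<Rightarrow> real \<Rightarrow> 'a \<Rightarrow> real" where
  "qb pi0 u phi f \<theta> = argmin (\<lambda>q. pi0 * q - u q \<theta> + phi (f - q))"

text \<open>Consumption when called (paid pi2 per unit of reduction f - q).\<close>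
definition qc :: "real \<Rightarrow> real \<Rightarrow> (real \<Rightarrow> 'a \<Rightarrow> real) \<Rightarrow> real \<Rightarrow> 'a \<Rightarrow> real" where
  "qc pi0 pi2 u f \<theta> = argmin (\<lambda>q. pi0 * q - u q \<theta> - pi2 * (f - q))"

definition Hcost :: "'a measure \<Rightarrow> real \<Rightarrow> real \<Rightarrow> real \<Rightarrow> (real \<Rightarrow> 'a \<Rightarrow> real)
    \<Rightarrow> (real \<Rightarrow> real) \<Rightarrow> real \<Rightarrow> real" where
  "Hcost M p pi0 pi2 u phi f =
     p * (\<integral>\<theta>. (let q = qc pi0 pi2 u f \<theta> in pi0 * q - u q \<theta> - pi2 * (f - q)) \<partial>M)
     + (1 - p) * (\<integral>\<theta>. (let q = qb pi0 u phi f \<theta> in pi0 * q - u q \<theta> + phi (f - q)) \<partial>M)"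

end

theory Submission
  imports Defs
begin

text \<open>Since \<open>\<partial>\<^sup>2u/\<partial>q\<^sup>2 = -1/d\<close>, the cost \<open>\<pi>\<^sub>0 q - u(q,\<theta>)\<close> is \<open>K(\<theta>) + (q - Q(\<theta>))\<^sup>2/(2d)\<close> with
  \<open>Q = q\<^sup>a\<close>. Minimising over \<open>q\<close>, the called branch costs \<open>K - \<pi>\<^sub>2(f - Q) - d\<pi>\<^sub>2\<^sup>2/2\<close>, and the
  uncalled branch costs \<open>K + \<phi>\<^bsub>d+\<lambda>\<^esub>(f - Q)\<close>, because the infimal convolution of
  \<open>x\<^sup>2/(2d)\<close> with the deadband penalty \<open>\<phi>\<^bsub>\<lambda>\<^esub>\<close> is \<open>\<phi>\<^bsub>d+\<lambda>\<^esub>\<close>. Hence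
  \<open>H(f) = const - p\<pi>\<^sub>2 f + (1-p) E \<phi>\<^bsub>d+\<lambda>\<^esub>(f - Q)\<close>. The convex penalty has subgradient
  at least \<open>(x - \<epsilon>)/(d+\<lambda>)\<close> at \<open>x\<close>, so any report above \<open>E Q + (d+\<lambda>)p\<pi>\<^sub>2/(1-p) + \<epsilon>\<close>
  can be lowered to decrease \<open>H\<close>. At \<open>f = E Q\<close> the spread hypothesis makes the penalty
  vanish, so \<open>H(f\<^sup>*) \<le> H(E Q) = E K - pd\<pi>\<^sub>2\<^sup>2/2 \<le> E K\<close>, the cost of not participating.\<close>

lemma penalty_nonneg: "lam > 0 \<Longrightarrow> penalty lam eps x \<ge> 0"
  unfolding penalty_def by auto

lemma penalty_minus [simp]: "penalty lam eps (- x) = penalty lam eps x"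
  unfolding penalty_def by auto

lemma penalty_eq_0: "\<bar>x\<bar> \<le> eps \<Longrightarrow> penalty lam eps x = 0"
  unfolding penalty_def by auto

lemma penalty_le_square:
  assumes "lam > 0" "eps \<ge> 0"
  shows "penalty lam eps x \<le> x\<^sup>2 / (2 * lam)"
proof (cases "\<bar>x\<bar> \<ge> eps")
  case True
  then have "(\<bar>x\<bar> - eps)\<^sup>2 \<le> \<bar>x\<bar>\<^sup>2" using assms by (intro power_mono) auto
  then show ?thesis using True assms unfolding penalty_def by (simp add: divide_right_mono)
qed (use assms in \<open>simp add: penalty_def\<close>)

lemma penalty_ge_excess_square:
  assumes "lam > 0" "eps \<ge> 0"
  shows "(max (x - eps) 0)\<^sup>2 / (2 * lam) \<le> penalty lam eps x"
  using assms unfolding penalty_def by (auto simp: max_def)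

lemma square_sum_div_le:
  fixes a b d lam :: real
  assumes "d > 0" "lam > 0"
  shows "(a + b)\<^sup>2 / (d + lam) \<le> a\<^sup>2 / d + b\<^sup>2 / lam"
proof -
  have "a\<^sup>2 / d + b\<^sup>2 / lam - (a + b)\<^sup>2 / (d + lam) = (lam * a - d * b)\<^sup>2 / (d * lam * (d + lam))"
    using assms by (simp add: field_simps power2_eq_square)
  also have "\<dots> \<ge> 0" using assms by simp
  finally show ?thesis by simp
qed

lemma penalty_inf_convolution_le_nonneg:
  fixes d lam eps x y :: real
  assumes "d > 0" "lam > 0" "eps \<ge> 0" "x + y \<ge> 0"
  shows "penalty (d + lam) eps (x + y) \<le> x\<^sup>2 / (2 * d) + penalty lam eps y"
proof (cases "x + y \<ge> eps")
  case True
  define t where "t = max (y - eps) 0"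
  have "(x + y - eps)\<^sup>2 \<le> (x + t)\<^sup>2"
    using True by (intro power_mono) (auto simp: t_def)
  also have "\<dots> \<le> (d + lam) * (x\<^sup>2 / d + t\<^sup>2 / lam)"
    using square_sum_div_le[OF assms(1,2)] assms by (simp add: divide_le_eq mult.commute)
  finally have "(x + y - eps)\<^sup>2 / (2 * (d + lam)) \<le> x\<^sup>2 / (2 * d) + t\<^sup>2 / (2 * lam)"
    using assms by (simp add: divide_le_eq field_simps)
  also have "t\<^sup>2 / (2 * lam) \<le> penalty lam eps y"
    unfolding t_def using assms(2,3) by (rule penalty_ge_excess_square)
  finally show ?thesis using True assms unfolding penalty_def by simp
next
  case False
  then show ?thesis
    using assms penalty_nonneg[of lam eps y] unfolding penalty_def by auto
qed

lemma penalty_inf_convolution_le: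
  fixes d lam eps x y :: real
  assumes "d > 0" "lam > 0" "eps \<ge> 0"
  shows "penalty (d + lam) eps (x + y) \<le> x\<^sup>2 / (2 * d) + penalty lam eps y"
proof (cases "x + y \<ge> 0")
  case False
  then have "penalty (d + lam) eps (- x + - y) \<le> (- x)\<^sup>2 / (2 * d) + penalty lam eps (- y)"
    using assms by (intro penalty_inf_convolution_le_nonneg) auto
  then show ?thesis by (simp only: minus_add_distrib[symmetric] penalty_minus power2_minus)
qed (use assms penalty_inf_convolution_le_nonneg in blast)

lemma penalty_inf_convolution_attained_nonneg:
  fixes d lam eps z :: real
  assumes "d > 0" "lam > 0" "eps \<ge> 0" "z \<ge> 0"
  shows "\<exists>x y. x + y = z \<and> x\<^sup>2 / (2 * d) + penalty lam eps y = penalty (d + lam) eps z"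
proof (cases "z \<ge> eps")
  case True
  define r where "r = (z - eps) / (d + lam)"
  have z: "z - eps = (d + lam) * r" using assms unfolding r_def by simp
  have r: "r \<ge> 0" using True assms unfolding r_def by simp
  have "(d * r)\<^sup>2 / (2 * d) + (lam * r)\<^sup>2 / (2 * lam) = ((d + lam) * r)\<^sup>2 / (2 * (d + lam))"
    using assms by (simp add: field_simps power2_eq_square)
  moreover have "penalty lam eps (z - d * r) = (lam * r)\<^sup>2 / (2 * lam)"
    using z r assms unfolding penalty_def by (simp add: algebra_simps)
  moreover have "penalty (d + lam) eps z = ((d + lam) * r)\<^sup>2 / (2 * (d + lam))"
    using z True assms unfolding penalty_def by simp
  ultimately show ?thesis by (intro exI[of _ "d * r"] exI[of _ "z - d * r"]) simp
next
  case False
  then show ?thesis using assms by (intro exI[of _ 0] exI[of _ z]) (simp add: penalty_eq_0)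
qed

lemma penalty_inf_convolution_attained:
  fixes d lam eps z :: real
  assumes "d > 0" "lam > 0" "eps \<ge> 0"
  shows "\<exists>x y. x + y = z \<and> x\<^sup>2 / (2 * d) + penalty lam eps y = penalty (d + lam) eps z"
proof (cases "z \<ge> 0")
  case False
  then obtain x y where "x + y = - z" "x\<^sup>2 / (2 * d) + penalty lam eps y = penalty (d + lam) eps (- z)"
    using assms penalty_inf_convolution_attained_nonneg[of d lam eps "- z"] by auto
  then show ?thesis by (intro exI[of _ "- x"] exI[of _ "- y"]) auto
qed (use assms penalty_inf_convolution_attained_nonneg in blast)

lemma half_square_tangent_le:
  fixes a b :: real
  shows "(a - b) * b \<le> a\<^sup>2 / 2 - b\<^sup>2 / 2"
proof -
  have "a\<^sup>2 / 2 - b\<^sup>2 / 2 - (a - b) * b = (a - b)\<^sup>2 / 2"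
    by (simp add: power2_eq_square algebra_simps)
  moreover have "(a - b)\<^sup>2 / 2 \<ge> 0" by simp
  ultimately show ?thesis by linarith
qed

lemma penalty_subgradient:
  fixes D eps x y :: real
  assumes "D > 0" "eps \<ge> 0" "y \<le> x"
  shows "(x - y) * (y - eps) / D \<le> penalty D eps x - penalty D eps y"
proof -
  have right: "D * penalty D eps v = (v - eps)\<^sup>2 / 2" if "v \<ge> eps" for v
    using that assms unfolding penalty_def by simp
  have left: "D * penalty D eps v = (v + eps)\<^sup>2 / 2" if "v \<le> - eps" for v
    using that assms unfolding penalty_def by (simp add: power2_commute add.commute)
  have nonneg: "0 \<le> D * penalty D eps v" for v
    using assms penalty_nonneg[of D eps v] by simp
  have "(x - y) * (y - eps) \<le> D * penalty D eps x - D * penalty D eps y"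
  proof -
    consider "y \<ge> eps" | "\<bar>y\<bar> < eps" | "y \<le> - eps" "x \<le> - eps" | "y \<le> - eps" "x > - eps"
      by linarith
    then show ?thesis
    proof cases
      case 1
      then show ?thesis using assms half_square_tangent_le[of "x - eps" "y - eps"] right[of x] right[of y]
        by simp
    next
      case 2
      have "(x - y) * (y - eps) \<le> 0" using 2 assms by (intro mult_nonneg_nonpos) auto
      moreover have "penalty D eps y = 0" using 2 by (intro penalty_eq_0) simp
      ultimately show ?thesis using nonneg[of x] by simp
    next
      case 3
      have "(x - y) * (y - eps) \<le> (x - y) * (y + eps)" using assms by (intro mult_left_mono) auto
      also have "\<dots> \<le> (x + eps)\<^sup>2 / 2 - (y + eps)\<^sup>2 / 2"
        using half_square_tangent_le[of "x + eps" "y + eps"] by simp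
      finally show ?thesis using 3 left[of x] left[of y] by simp
    next
      case 4
      have "(x - y) * (y - eps) \<le> (x - y) * (y + eps)" using assms by (intro mult_left_mono) auto
      also have "\<dots> \<le> - (y + eps) * (y + eps)" using 4 by (intro mult_right_mono_neg) auto
      also have "\<dots> \<le> - (y + eps)\<^sup>2 / 2"
        using zero_le_square[of "y + eps"] by (simp only: power2_eq_square mult_minus_left)
      finally show ?thesis using 4 left[of y] nonneg[of x] by simp
    qed
  qed
  then have "(x - y) * (y - eps) \<le> D * (penalty D eps x - penalty D eps y)"
    by (simp add: right_diff_distrib)
  then show ?thesis using assms by (simp add: pos_divide_le_eq mult.commute)
qed

lemma argmin_minimum:
  assumes "\<forall>q. m \<le> g q" "g x = m"
  shows "g (argmin g) = m"
proof -
  have "\<forall>q. g (argmin g) \<le> g q"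
    unfolding argmin_def by (rule someI[of _ x]) (use assms in auto)
  then show ?thesis using assms by (metis antisym)
qed

lemma argmin_unique:
  assumes "\<And>q. q \<noteq> x \<Longrightarrow> g x < g q"
  shows "argmin g = x"
  using argmin_minimum[of "g x" g x] assms by (metis order.strict_implies_order order.refl less_irrefl)

lemma constant_second_derivative_quadratic:
  fixes U U' :: "real \<Rightarrow> real"
  assumes U: "\<And>x. (U has_real_derivative U' x) (at x)"
    and U': "\<And>x. (U' has_real_derivative c) (at x)"
  shows "U x = U 0 + U' 0 * x + c / 2 * x\<^sup>2"
proof -
  have "((\<lambda>x. U' x - c * x) has_real_derivative 0) (at x)" for x
    using U'[of x] by (auto intro!: derivative_eq_intros)
  then have U'_eq: "U' x = U' 0 + c * x" for x
    using DERIV_isconst_all[of "\<lambda>x. U' x - c * x" x 0] by simp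
  have "((\<lambda>x. U x - U' 0 * x - c / 2 * x\<^sup>2) has_real_derivative 0) (at x)" for x
  proof -
    have "((\<lambda>x. U x - U' 0 * x - c / 2 * x\<^sup>2) has_real_derivative U' x - U' 0 - c / 2 * (2 * x)) (at x)"
      using U[of x] by (auto intro!: derivative_eq_intros)
    then show ?thesis using U'_eq[of x] by simp
  qed
  then show ?thesis
    using DERIV_isconst_all[of "\<lambda>x. U x - U' 0 * x - c / 2 * x\<^sup>2" x 0] by simp
qed

lemma cost_completed_square:
  fixes U U' :: "real \<Rightarrow> real" and d pi0 :: real
  assumes "\<And>x. (U has_real_derivative U' x) (at x)"
    and "\<And>x. (U' has_real_derivative - 1 / d) (at x)" and "d > 0"
  defines "Q \<equiv> d * (U' 0 - pi0)"
  shows "pi0 * q - U q = (- U 0 - Q\<^sup>2 / (2 * d)) + (q - Q)\<^sup>2 / (2 * d)"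
proof -
  have "U q = U 0 + U' 0 * q + (- 1 / d) / 2 * q\<^sup>2"
    using assms(1,2) by (rule constant_second_derivative_quadratic)
  then have U_q: "U q = U 0 + U' 0 * q - q\<^sup>2 / (2 * d)" by simp
  show ?thesis unfolding U_q Q_def using assms(3) by (simp add: field_simps power2_eq_square)
qed

locale quadratic_cost =
  fixes pi0 :: real and u :: "real \<Rightarrow> 'a \<Rightarrow> real" and K Q :: "'a \<Rightarrow> real" and d :: real
  assumes cost: "pi0 * q - u q \<theta> = K \<theta> + (q - Q \<theta>)\<^sup>2 / (2 * d)"
    and d_pos: "d > 0"
begin

lemma qa_eq: "qa pi0 u \<theta> = Q \<theta>"
  unfolding qa_def using d_pos by (intro argmin_unique) (simp add: cost)

lemma qc_cost:
  "(let q = qc pi0 pi2 u f \<theta> in pi0 * q - u q \<theta> - pi2 * (f - q))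
     = K \<theta> - pi2 * (f - Q \<theta>) - d * pi2\<^sup>2 / 2"
proof -
  define g where "g q = pi0 * q - u q \<theta> - pi2 * (f - q)" for q
  have g: "g q = K \<theta> - pi2 * (f - Q \<theta>) - d * pi2\<^sup>2 / 2 + (q - (Q \<theta> - d * pi2))\<^sup>2 / (2 * d)" for q
    unfolding g_def cost using d_pos by (simp add: field_simps power2_eq_square)
  have "g (argmin g) = K \<theta> - pi2 * (f - Q \<theta>) - d * pi2\<^sup>2 / 2"
    by (rule argmin_minimum[where x = "Q \<theta> - d * pi2"]) (use d_pos in \<open>simp_all add: g\<close>)
  then show ?thesis unfolding qc_def g_def Let_def .
qed

lemma qb_cost:
  assumes "lam > 0" "eps \<ge> 0"
  shows "(let q = qb pi0 u (penalty lam eps) f \<theta> in pi0 * q - u q \<theta> + penalty lam eps (f - q))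
     = K \<theta> + penalty (d + lam) eps (f - Q \<theta>)"
proof -
  define g where "g q = pi0 * q - u q \<theta> + penalty lam eps (f - q)" for q
  have g: "g q = K \<theta> + ((q - Q \<theta>)\<^sup>2 / (2 * d) + penalty lam eps (f - q))" for q
    unfolding g_def by (simp add: cost)
  obtain x y where xy: "x + y = f - Q \<theta>"
    "x\<^sup>2 / (2 * d) + penalty lam eps y = penalty (d + lam) eps (f - Q \<theta>)"
    using penalty_inf_convolution_attained[OF d_pos assms] by blast
  have "f - (Q \<theta> + x) = y" using xy(1) by simp
  then have "g (Q \<theta> + x) = K \<theta> + penalty (d + lam) eps (f - Q \<theta>)"
    unfolding g using xy(2) by simp
  moreover have "\<forall>q. K \<theta> + penalty (d + lam) eps (f - Q \<theta>) \<le> g q"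
  proof
    fix q
    show "K \<theta> + penalty (d + lam) eps (f - Q \<theta>) \<le> g q"
      using penalty_inf_convolution_le[OF d_pos assms, of "q - Q \<theta>" "f - q"] by (simp add: g)
  qed
  ultimately have "g (argmin g) = K \<theta> + penalty (d + lam) eps (f - Q \<theta>)"
    by (intro argmin_minimum)
  then show ?thesis unfolding qb_def g_def Let_def .
qed

end

context prob_space
begin

lemma integrable_penalty_shift:
  fixes Q :: "'a \<Rightarrow> real"
  assumes Q: "Q \<in> borel_measurable M" "\<forall>\<theta>\<in>space M. \<bar>Q \<theta>\<bar> \<le> c"
    and "D > 0" "eps \<ge> 0"
  shows "integrable M (\<lambda>\<theta>. penalty D eps (f - Q \<theta>))"
proof (rule integrable_const_bound[where B = "(\<bar>f\<bar> + c)\<^sup>2 / (2 * D)"])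
  show "AE \<theta> in M. norm (penalty D eps (f - Q \<theta>)) \<le> (\<bar>f\<bar> + c)\<^sup>2 / (2 * D)"
  proof (rule AE_I2)
    fix \<theta> assume "\<theta> \<in> space M"
    then have "\<bar>f - Q \<theta>\<bar> \<le> \<bar>f\<bar> + c" using Q(2) by (auto intro: abs_triangle_ineq4[THEN order_trans])
    from power_mono[OF this abs_ge_zero, of 2] have "(f - Q \<theta>)\<^sup>2 \<le> (\<bar>f\<bar> + c)\<^sup>2" by simp
    then have "(f - Q \<theta>)\<^sup>2 / (2 * D) \<le> (\<bar>f\<bar> + c)\<^sup>2 / (2 * D)"
      using assms by (intro divide_right_mono) auto
    then show "norm (penalty D eps (f - Q \<theta>)) \<le> (\<bar>f\<bar> + c)\<^sup>2 / (2 * D)"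
      using assms penalty_nonneg[of D eps "f - Q \<theta>"] penalty_le_square[of D eps "f - Q \<theta>"] by simp
  qed
  show "(\<lambda>\<theta>. penalty D eps (f - Q \<theta>)) \<in> borel_measurable M"
    using Q(1) unfolding penalty_def by measurable
qed

lemma integrable_abs_bounded:
  fixes Q :: "'a \<Rightarrow> real"
  assumes "Q \<in> borel_measurable M" "\<forall>\<theta>\<in>space M. \<bar>Q \<theta>\<bar> \<le> c"
  shows "integrable M Q"
  using assms by (intro integrable_const_bound[where B = c]) auto

lemma integrable_square_bounded:
  fixes Q :: "'a \<Rightarrow> real"
  assumes "Q \<in> borel_measurable M" "\<forall>\<theta>\<in>space M. \<bar>Q \<theta>\<bar> \<le> c"
  shows "integrable M (\<lambda>\<theta>. (Q \<theta>)\<^sup>2)"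
proof (rule integrable_abs_bounded)
  show "\<forall>\<theta>\<in>space M. \<bar>(Q \<theta>)\<^sup>2\<bar> \<le> c\<^sup>2"
  proof
    fix \<theta> assume "\<theta> \<in> space M"
    then have "\<bar>Q \<theta>\<bar>\<^sup>2 \<le> c\<^sup>2" using assms(2) by (intro power_mono) auto
    then show "\<bar>(Q \<theta>)\<^sup>2\<bar> \<le> c\<^sup>2" by simp
  qed
qed (use assms(1) in measurable)

lemma expected_penalty_increment_ge:
  fixes Q :: "'a \<Rightarrow> real"
  assumes Q: "Q \<in> borel_measurable M" "\<forall>\<theta>\<in>space M. \<bar>Q \<theta>\<bar> \<le> c"
    and "D > 0" "eps \<ge> 0" "f1 \<le> f2"
  shows "(f2 - f1) * (f1 - eps - (\<integral>\<theta>. Q \<theta> \<partial>M)) / D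
    \<le> (\<integral>\<theta>. penalty D eps (f2 - Q \<theta>) \<partial>M) - (\<integral>\<theta>. penalty D eps (f1 - Q \<theta>) \<partial>M)"
proof -
  have Q_int: "integrable M Q" using Q by (rule integrable_abs_bounded)
  have "(f2 - f1) * (f1 - eps - (\<integral>\<theta>. Q \<theta> \<partial>M)) / D = (\<integral>\<theta>. (f2 - f1) * (f1 - Q \<theta> - eps) / D \<partial>M)"
    using Q_int by (simp add: prob_space algebra_simps)
  also have "\<dots> \<le> (\<integral>\<theta>. penalty D eps (f2 - Q \<theta>) - penalty D eps (f1 - Q \<theta>) \<partial>M)"
  proof (rule integral_mono)
    fix \<theta>
    show "(f2 - f1) * (f1 - Q \<theta> - eps) / D \<le> penalty D eps (f2 - Q \<theta>) - penalty D eps (f1 - Q \<theta>)"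
      using penalty_subgradient[of D eps "f1 - Q \<theta>" "f2 - Q \<theta>"] assms by simp
  qed (use Q_int integrable_penalty_shift[OF Q assms(3,4)] in simp_all)
  also have "\<dots> = (\<integral>\<theta>. penalty D eps (f2 - Q \<theta>) \<partial>M) - (\<integral>\<theta>. penalty D eps (f1 - Q \<theta>) \<partial>M)"
    using integrable_penalty_shift[OF Q assms(3,4)] by simp
  finally show ?thesis .
qed

lemma expected_penalty_minimizer_le:
  fixes Q :: "'a \<Rightarrow> real"
  assumes Q: "Q \<in> borel_measurable M" "\<forall>\<theta>\<in>space M. \<bar>Q \<theta>\<bar> \<le> c"
    and "D > 0" "eps \<ge> 0" "b > 0"
    and min: "\<And>f. b * (\<integral>\<theta>. penalty D eps (fstar - Q \<theta>) \<partial>M) - a * fstar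
                 \<le> b * (\<integral>\<theta>. penalty D eps (f - Q \<theta>) \<partial>M) - a * f"
  shows "fstar - (\<integral>\<theta>. Q \<theta> \<partial>M) \<le> D * (a / b) + eps"
proof (rule ccontr)
  define EQ where "EQ = (\<integral>\<theta>. Q \<theta> \<partial>M)"
  define E where "E f = (\<integral>\<theta>. penalty D eps (f - Q \<theta>) \<partial>M)" for f
  define m where "m = D * (a / b)"
  assume "\<not> fstar - (\<integral>\<theta>. Q \<theta> \<partial>M) \<le> D * (a / b) + eps"
  then have gap: "fstar > EQ + m + eps" unfolding EQ_def m_def by simp
  define f1 where "f1 = (fstar + EQ + m + eps) / 2"
  have "f1 < fstar" using gap unfolding f1_def by simp
  have "m < f1 - eps - EQ" using gap unfolding f1_def by (simp add: field_simps)
  then have "a / b < (f1 - eps - EQ) / D"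
    using assms(3) unfolding m_def by (simp add: pos_less_divide_eq mult.commute)
  then have "(fstar - f1) * (a / b) < (fstar - f1) * ((f1 - eps - EQ) / D)"
    using \<open>f1 < fstar\<close> by (intro mult_strict_left_mono) auto
  also have "\<dots> \<le> E fstar - E f1"
    using expected_penalty_increment_ge[OF Q assms(3,4), of f1 fstar] \<open>f1 < fstar\<close>
    unfolding E_def EQ_def by simp
  finally have "a * (fstar - f1) < b * (E fstar - E f1)"
    using assms(5) by (simp add: field_simps)
  then show False using min[of f1] unfolding E_def by (simp add: algebra_simps)
qed

end

locale quadratic_consumer = quadratic_cost pi0 u K Q d + prob_space M
  for M :: "'a measure" and pi0 u K Q d +
  fixes c :: real
  assumes K_integrable: "integrable M K"
    and Q_measurable: "Q \<in> borel_measurable M"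
    and Q_bounded: "\<forall>\<theta>\<in>space M. \<bar>Q \<theta>\<bar> \<le> c"
begin

lemma Q_integrable: "integrable M Q"
  using Q_measurable Q_bounded by (rule integrable_abs_bounded)

lemma Hcost_eq:
  assumes "lam > 0" "eps \<ge> 0"
  shows "Hcost M p pi0 pi2 u (penalty lam eps) f
    = (\<integral>\<theta>. K \<theta> \<partial>M) - p * pi2 * (f - (\<integral>\<theta>. Q \<theta> \<partial>M)) - p * (d * pi2\<^sup>2 / 2)
      + (1 - p) * (\<integral>\<theta>. penalty (d + lam) eps (f - Q \<theta>) \<partial>M)"
proof -
  have called: "(\<integral>\<theta>. K \<theta> - pi2 * (f - Q \<theta>) - d * pi2\<^sup>2 / 2 \<partial>M)
      = (\<integral>\<theta>. K \<theta> \<partial>M) - pi2 * (f - (\<integral>\<theta>. Q \<theta> \<partial>M)) - d * pi2\<^sup>2 / 2"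
    using K_integrable Q_integrable by (simp add: prob_space algebra_simps)
  have not_called: "(\<integral>\<theta>. K \<theta> + penalty (d + lam) eps (f - Q \<theta>) \<partial>M)
      = (\<integral>\<theta>. K \<theta> \<partial>M) + (\<integral>\<theta>. penalty (d + lam) eps (f - Q \<theta>) \<partial>M)"
    using K_integrable integrable_penalty_shift[OF Q_measurable Q_bounded] d_pos assms by simp
  show ?thesis
    unfolding Hcost_def qc_cost qb_cost[OF assms] called not_called by (simp add: ring_distribs)
qed

lemma Hcost_minimizer_excess_le:
  assumes "lam > 0" "eps \<ge> 0" "p < 1"
    and opt: "\<forall>f. Hcost M p pi0 pi2 u (penalty lam eps) fstar \<le> Hcost M p pi0 pi2 u (penalty lam eps) f"
  shows "fstar - (\<integral>\<theta>. Q \<theta> \<partial>M) \<le> (d + lam) * (p * pi2 / (1 - p)) + eps"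
proof (rule expected_penalty_minimizer_le[OF Q_measurable Q_bounded])
  fix f
  show "(1 - p) * (\<integral>\<theta>. penalty (d + lam) eps (fstar - Q \<theta>) \<partial>M) - p * pi2 * fstar
    \<le> (1 - p) * (\<integral>\<theta>. penalty (d + lam) eps (f - Q \<theta>) \<partial>M) - p * pi2 * f"
    using opt[rule_format, of f] unfolding Hcost_eq[OF assms(1,2)] by (simp add: algebra_simps)
qed (use d_pos assms in auto)

lemma Hcost_at_mean:
  assumes "lam > 0" "eps \<ge> 0" and spread: "\<forall>\<theta>\<in>space M. \<bar>(\<integral>\<theta>. Q \<theta> \<partial>M) - Q \<theta>\<bar> \<le> eps"
  shows "Hcost M p pi0 pi2 u (penalty lam eps) (\<integral>\<theta>. Q \<theta> \<partial>M) = (\<integral>\<theta>. K \<theta> \<partial>M) - p * (d * pi2\<^sup>2 / 2)"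
proof -
  have "(\<integral>\<theta>. penalty (d + lam) eps ((\<integral>\<theta>. Q \<theta> \<partial>M) - Q \<theta>) \<partial>M) = (\<integral>\<theta>. 0 \<partial>M)"
    using spread by (intro Bochner_Integration.integral_cong refl penalty_eq_0) auto
  then show ?thesis unfolding Hcost_eq[OF assms(1,2)] by simp
qed

end

theorem theorem4:
  fixes M :: "real measure" and u u' :: "real \<Rightarrow> real \<Rightarrow> real"
    and d lam eps pi0 pi2 p q_min q_max fstar :: real
  assumes prob: "prob_space M" and sets_M: "sets M = sets borel"
    and cont: "\<forall>t. measure M {t} = 0"
    and u_int: "\<forall>q. integrable M (\<lambda>\<theta>. u q \<theta>)"
    and u_deriv: "\<forall>\<theta> q. ((\<lambda>q. u q \<theta>) has_real_derivative u' q \<theta>) (at q)"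
    and u_deriv2: "\<forall>\<theta> q. ((\<lambda>q. u' q \<theta>) has_real_derivative (- 1 / d)) (at q)"
    and u_mono: "\<forall>\<theta>. mono_on {q_min..q_max} (\<lambda>q. u q \<theta>)"
    and d_pos: "d > 0" and lam_pos: "lam > 0" and eps_pos: "eps > 0"
    and pi0_pos: "pi0 > 0" and pi2_pos: "pi2 > 0" and p_pos: "0 < p" and p_lt1: "p < 1"
    and qa_range: "\<forall>\<theta>\<in>space M. qa pi0 u \<theta> \<in> {q_min..q_max}"
    and spread: "max (q_max - (\<integral>\<theta>. qa pi0 u \<theta> \<partial>M)) ((\<integral>\<theta>. qa pi0 u \<theta> \<partial>M) - q_min) \<le> eps"
    and fstar_opt: "\<forall>f. Hcost M p pi0 pi2 u (penalty lam eps) fstar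
                        \<le> Hcost M p pi0 pi2 u (penalty lam eps) f"
  shows "(\<integral>\<theta>. fstar - qa pi0 u \<theta> \<partial>M) = fstar - (\<integral>\<theta>. qa pi0 u \<theta> \<partial>M)
     \<and> fstar - (\<integral>\<theta>. qa pi0 u \<theta> \<partial>M) \<le> (d + lam) * (p * pi2 / (1 - p)) + eps
     \<and> Hcost M p pi0 pi2 u (penalty lam eps) fstar
         \<le> (\<integral>\<theta>. pi0 * qa pi0 u \<theta> - u (qa pi0 u \<theta>) \<theta> \<partial>M)"
proof -
  interpret prob_space M by (rule prob)
  define Q where "Q \<theta> = d * (u' 0 \<theta> - pi0)" for \<theta>
  define K where "K \<theta> = - u 0 \<theta> - (Q \<theta>)\<^sup>2 / (2 * d)" for \<theta>
  interpret quadratic_cost pi0 u K Q d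
    unfolding K_def Q_def using u_deriv u_deriv2 d_pos
    by unfold_locales (auto intro: cost_completed_square)
  have "u' 0 \<theta> = u 1 \<theta> - u 0 \<theta> + 1 / (2 * d)" for \<theta>
    using constant_second_derivative_quadratic[of "\<lambda>q. u q \<theta>" "\<lambda>q. u' q \<theta>" "- 1 / d" 1]
      u_deriv u_deriv2 by simp
  moreover have [measurable]: "(\<lambda>\<theta>. u q \<theta>) \<in> borel_measurable M" for q
    using u_int by auto
  ultimately have Q_meas: "Q \<in> borel_measurable M" unfolding Q_def by simp
  have qa: "qa pi0 u = Q" using qa_eq by auto
  have Q_bounded: "\<forall>\<theta>\<in>space M. \<bar>Q \<theta>\<bar> \<le> \<bar>q_min\<bar> + \<bar>q_max\<bar>"
    using qa_range unfolding qa by auto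
  have "integrable M K"
    unfolding K_def using u_int integrable_square_bounded[OF Q_meas Q_bounded] by auto
  then interpret quadratic_consumer M pi0 u K Q d "\<bar>q_min\<bar> + \<bar>q_max\<bar>"
    using Q_meas Q_bounded by unfold_locales
  have "\<forall>\<theta>\<in>space M. \<bar>(\<integral>\<theta>. Q \<theta> \<partial>M) - Q \<theta>\<bar> \<le> eps"
    using qa_range spread unfolding qa by auto
  then have "Hcost M p pi0 pi2 u (penalty lam eps) fstar \<le> (\<integral>\<theta>. K \<theta> \<partial>M) - p * (d * pi2\<^sup>2 / 2)"
    using fstar_opt Hcost_at_mean lam_pos eps_pos by (metis less_imp_le)
  also have "\<dots> \<le> (\<integral>\<theta>. K \<theta> \<partial>M)" using p_pos d_pos by simp
  also have "\<dots> = (\<integral>\<theta>. pi0 * qa pi0 u \<theta> - u (qa pi0 u \<theta>) \<theta> \<partial>M)"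
    unfolding qa cost by simp
  finally show ?thesis
    using Hcost_minimizer_excess_le[OF lam_pos _ p_lt1 fstar_opt] eps_pos Q_integrable
    by (simp add: qa prob_space)
qed

end
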